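(* Let $K$ be a field of characteristic $p$ with $K \neq \mathbb{F}_2$, let $S \subseteq \mathbb{N}_0$ and $m \in \mathbb{N}$. Then: (1) $mS = \{ms : s \in S\}$ is a $K$-DML set over split torus if and only if $S$ is a $K$-DML set over split torus; (2) $m + S = \{m + s : s \in S\}$ is a $K$-DML set over split torus if and only if $S$ is a $K$-DML set over split torus.
   Context: For a quasi-projective variety $X$ over $K$, a set $S \subseteq \mathbb{N}_0$ is a $K$-DML set over $X$ if there exist an endomorphism $\Phi$ of $X$ (a morphism $X \to X$ defined over $K$), a point $\alpha \in X(K)$ and a closed subvariety $V \subseteq X$ defined over $K$ (not necessarily irreducible) such that $S = \{ n \in \mathbb{N}_0 : \Phi^n(\alpha) \in V(K)\}$. $S$ is a $K$-DML set over split torus if it is a $K$-DML set over $\mathbb{G}_m^k$ for some $k \in \mathbb{N}$. $\mathbb{N}$ denotes the positive integers and $\mathbb{N}_0 = \mathbb{N}\cup\{0\}$. *)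

theory Defs
  imports Main
begin

text \<open>Laurent polynomials in k variables over K, i.e. elements of the coordinate ring
  K[x_1^{+-1},...,x_k^{+-1}] of the split torus G_m^k, represented by their finitely
  supported coefficient function on exponent vectors (int lists of length k).\<close>

type_synonym 'a lpoly = "int list \<Rightarrow> 'a"

definition is_lpoly :: "nat \<Rightarrow> ('a::zero) lpoly \<Rightarrow> bool" where
  "is_lpoly k f \<longleftrightarrow> finite {e. f e \<noteq> 0} \<and> (\<forall>e. f e \<noteq> 0 \<longrightarrow> length e = k)"

definition lp_mult :: "('a::comm_ring_1) lpoly \<Rightarrow> 'a lpoly \<Rightarrow> 'a lpoly" where
  "lp_mult f g = (\<lambda>e. \<Sum>(a,b)\<in>{a. f a \<noteq> 0} \<times> {b. g b \<noteq> 0}.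
      if map2 (+) a b = e then f a * g b else 0)"

definition lp_one :: "nat \<Rightarrow> ('a::comm_ring_1) lpoly" where
  "lp_one k = (\<lambda>e. if e = replicate k 0 then 1 else 0)"

definition lp_unit :: "nat \<Rightarrow> ('a::comm_ring_1) lpoly \<Rightarrow> bool" where
  "lp_unit k f \<longleftrightarrow> is_lpoly k f \<and> (\<exists>g. is_lpoly k g \<and> lp_mult f g = lp_one k)"

definition lp_eval :: "('a::field) lpoly \<Rightarrow> 'a list \<Rightarrow> 'a" where
  "lp_eval f x = (\<Sum>e\<in>{e. f e \<noteq> 0}. f e * (\<Prod>j<length x. (x ! j) powi (e ! j)))"

definition torus_point :: "nat \<Rightarrow> ('a::field) list \<Rightarrow> bool" where
  "torus_point k x \<longleftrightarrow> length x = k \<and> (\<forall>j<k. x ! j \<noteq> 0)"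

text \<open>Endomorphisms of G_m^k over K: a morphism G_m^k -> G_m^k corresponds to a
  K-algebra map K[y^{+-1}] -> K[x^{+-1}], i.e. a k-tuple of units of K[x^{+-1}].\<close>
definition torus_endo :: "nat \<Rightarrow> ('a::field) lpoly list \<Rightarrow> bool" where
  "torus_endo k \<Phi> \<longleftrightarrow> length \<Phi> = k \<and> (\<forall>i<k. lp_unit k (\<Phi> ! i))"

definition apply_endo :: "('a::field) lpoly list \<Rightarrow> 'a list \<Rightarrow> 'a list" where
  "apply_endo \<Phi> x = map (\<lambda>f. lp_eval f x) \<Phi>"

definition torus_closed_points :: "nat \<Rightarrow> ('a::field) list set \<Rightarrow> bool" where
  "torus_closed_points k V \<longleftrightarrow> (\<exists>F. finite F \<and> (\<forall>f\<in>F. is_lpoly k f) \<and>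
      V = {x. torus_point k x \<and> (\<forall>f\<in>F. lp_eval f x = 0)})"

definition DML_torus :: "'a::field itself \<Rightarrow> nat \<Rightarrow> nat set \<Rightarrow> bool" where
  "DML_torus _ k S \<longleftrightarrow> (\<exists>(\<Phi>::'a lpoly list) \<alpha> V. torus_endo k \<Phi> \<and> torus_point k \<alpha> \<and>
      torus_closed_points k V \<and> S = {n. (apply_endo \<Phi> ^^ n) \<alpha> \<in> V})"

definition DML_split_torus :: "'a::field itself \<Rightarrow> nat set \<Rightarrow> bool" where
  "DML_split_torus K S \<longleftrightarrow> (\<exists>k\<ge>1. DML_torus K k S)"

end

(* Units of K[x\<^sup>\<plusminus>\<^sup>1] are monomials, so the endomorphisms of the split torus are the monomial
   maps x \<mapsto> (c\<^sub>i x\<^bsup>E\<^sub>i\<^esup>)\<^sub>i. They are closed under composition and pull closed sets back to closed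
   sets, so if S = {n. \<Phi>\<^sup>n(\<alpha>) \<in> V} then {n. m n + r \<in> S} is again a DML set (iterate \<Phi>\<^sup>m
   starting from \<Phi>\<^sup>r(\<alpha>)); this gives both backward implications.
   For the forward implications, run m (resp. m + 1) copies of the torus as a shift register: a
   delay line whose first block at time n is \<Phi>\<^bsup>n div m\<^esup>(\<alpha>), resp. \<Phi>\<^bsup>n - m\<^esup>(\<alpha>), shows that
   {n. n div m \<in> S} and {n. n - m \<in> S} are DML sets, and the same register run with the identity
   on the constant points a and 1, where a \<noteq> 0, 1 (this needs K \<noteq> \<bbbF>\<^sub>2), shows that the multiples
   of m and {m..} are DML sets. Products of tori make DML sets closed under intersection, and
   m S = {n. n div m \<in> S} \<inter> {n. m dvd n}  and  m + S = {n. n - m \<in> S} \<inter> {m..}. *)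

theory Submission
  imports Defs "HOL-Library.List_Lexorder"
begin

section \<open>Units of the Laurent polynomial ring\<close>

lemma map2_plus_commute: "map2 (+) (a::int list) b = map2 (+) b a"
  by (induction a arbitrary: b) (auto simp: zip_Cons1 split: list.splits)

lemma map2_plus_less_mono_left:
  fixes a b c :: "int list"
  shows "length a = length b \<Longrightarrow> length c = length a \<Longrightarrow> a < b \<Longrightarrow> map2 (+) a c < map2 (+) b c"
proof (induction a arbitrary: b c)
  case Nil then show ?case by simp
next
  case (Cons x xs)
  then obtain y ys z zs where "b = y # ys" and "c = z # zs"
    by (metis length_Suc_conv)
  with Cons show ?case by auto
qed

lemma map2_plus_less_mono_right:
  fixes a b c :: "int list"
  shows "length a = length b \<Longrightarrow> length c = length a \<Longrightarrow> a < b \<Longrightarrow> map2 (+) c a < map2 (+) c b"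
  using map2_plus_less_mono_left[of a b c] by (simp add: map2_plus_commute)

lemma map2_plus_less_of_le:
  fixes a b A B :: "int list"
  assumes "length a = k" "length b = k" "length A = k" "length B = k"
    and "a \<le> A" "b \<le> B" "(a, b) \<noteq> (A, B)"
  shows "map2 (+) a b < map2 (+) A B"
proof (cases "a = A")
  case True
  with assms have "b < B" by auto
  with True assms show ?thesis using map2_plus_less_mono_right[of b B A] by simp
next
  case False
  with assms have "map2 (+) a b < map2 (+) A b" using map2_plus_less_mono_left[of a A b] by simp
  also have "\<dots> \<le> map2 (+) A B"
    using assms map2_plus_less_mono_right[of b B A] by (cases "b = B") (auto simp: order_le_less)
  finally show ?thesis .
qed

lemma lp_mult_unique_decomposition:
  fixes f g :: "'a::comm_ring_1 lpoly"
  assumes "is_lpoly k f" "is_lpoly k g" "f A \<noteq> 0" "g B \<noteq> 0"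
    and unique: "\<And>a b. f a \<noteq> 0 \<Longrightarrow> g b \<noteq> 0 \<Longrightarrow> map2 (+) a b = map2 (+) A B \<Longrightarrow> (a, b) = (A, B)"
  shows "lp_mult f g (map2 (+) A B) = f A * g B"
proof -
  let ?P = "{a. f a \<noteq> 0} \<times> {b. g b \<noteq> 0}"
  let ?t = "\<lambda>(a, b). if map2 (+) a b = map2 (+) A B then f a * g b else 0"
  have "finite ?P" using assms(1,2) by (auto simp: is_lpoly_def)
  moreover have "(A, B) \<in> ?P" using assms(3,4) by simp
  ultimately have "sum ?t ?P = ?t (A, B) + sum ?t (?P - {(A, B)})"
    by (rule sum.remove)
  also have "sum ?t (?P - {(A, B)}) = 0"
  proof (intro sum.neutral ballI)
    fix p assume p: "p \<in> ?P - {(A, B)}"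
    obtain x y where "p = (x, y)" by fastforce
    with p unique[of x y] show "?t p = 0" by auto
  qed
  finally show ?thesis by (simp add: lp_mult_def)
qed

definition lp_monom :: "'a::zero \<Rightarrow> int list \<Rightarrow> 'a lpoly" where
  "lp_monom c E = (\<lambda>e. if e = E then c else 0)"

lemma lp_unit_imp_monom:
  fixes f :: "'a::field lpoly"
  assumes "lp_unit k f"
  obtains c E where "c \<noteq> 0" "length E = k" "f = lp_monom c E"
proof -
  obtain g where f: "is_lpoly k f" and g: "is_lpoly k g" and fg: "lp_mult f g = lp_one k"
    using assms unfolding lp_unit_def by blast
  let ?F = "{a. f a \<noteq> 0}" and ?G = "{b. g b \<noteq> 0}"
  have finF: "finite ?F" and finG: "finite ?G" using f g by (auto simp: is_lpoly_def)
  have len: "length x = k" "length y = k" if "x \<in> ?F" "y \<in> ?G" for x y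
    using f g that by (auto simp: is_lpoly_def)
  have "lp_mult f g e = 0" if "?F \<times> ?G = {}" for e
    unfolding lp_mult_def that by simp
  moreover have "lp_mult f g (replicate k 0) = 1" using fg by (simp add: lp_one_def)
  ultimately have "?F \<noteq> {}" "?G \<noteq> {}" by fastforce+
  define A where "A = Max ?F"
  define B where "B = Max ?G"
  define a where "a = Min ?F"
  define b where "b = Min ?G"
  have AB: "A \<in> ?F" "B \<in> ?G" "a \<in> ?F" "b \<in> ?G"
    unfolding A_def B_def a_def b_def
    by (rule Max_in[OF finF \<open>?F \<noteq> {}\<close>] Max_in[OF finG \<open>?G \<noteq> {}\<close>]
        Min_in[OF finF \<open>?F \<noteq> {}\<close>] Min_in[OF finG \<open>?G \<noteq> {}\<close>])+
  have bounds: "a \<le> x" "x \<le> A" "b \<le> y" "y \<le> B" if "x \<in> ?F" "y \<in> ?G" for x y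
    unfolding A_def B_def a_def b_def
    by (rule Min_le[OF finF that(1)] Max_ge[OF finF that(1)]
        Min_le[OF finG that(2)] Max_ge[OF finG that(2)])+
  \<comment> \<open>Lexicographically, the largest (smallest) exponent of a product arises only as the sum of
    the largest (smallest) exponents of the factors; as the product is 1, both sums vanish.\<close>
  have top_unique: "map2 (+) x y \<noteq> map2 (+) A B" if "x \<in> ?F" "y \<in> ?G" "(x, y) \<noteq> (A, B)" for x y
    using map2_plus_less_of_le[OF len[OF that(1,2)] len[OF AB(1,2)] bounds(2,4)[OF that(1,2)] that(3)]
    by simp
  have bot_unique: "map2 (+) x y \<noteq> map2 (+) a b" if "x \<in> ?F" "y \<in> ?G" "(x, y) \<noteq> (a, b)" for x y
    using map2_plus_less_of_le[OF len[OF AB(3,4)] len[OF that(1,2)] bounds(1,3)[OF that(1,2)] not_sym[OF that(3)]]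
    by simp
  have "lp_mult f g (map2 (+) A B) = f A * g B"
    by (rule lp_mult_unique_decomposition[OF f g]) (use AB top_unique in auto)
  with AB fg have top: "map2 (+) A B = replicate k 0"
    by (metis (mono_tags) lp_one_def mem_Collect_eq no_zero_divisors)
  have "lp_mult f g (map2 (+) a b) = f a * g b"
    by (rule lp_mult_unique_decomposition[OF f g]) (use AB bot_unique in auto)
  with AB fg have bot: "map2 (+) a b = replicate k 0"
    by (metis (mono_tags) lp_one_def mem_Collect_eq no_zero_divisors)
  have "a = A"
    using top_unique[OF AB(3,4)] top bot by auto
  have "f x = 0" if "x \<noteq> A" for x
  proof (rule ccontr)
    assume "f x \<noteq> 0"
    then have "a \<le> x" "x \<le> A" using bounds AB(2) by auto
    with \<open>a = A\<close> that show False by simp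
  qed
  then have "f = lp_monom (f A) A"
    by (intro ext) (auto simp: lp_monom_def)
  with AB len that show ?thesis by blast
qed

lemma lp_unit_lp_monom:
  fixes c :: "'a::field"
  assumes "c \<noteq> 0" "length E = k"
  shows "lp_unit k (lp_monom c E)"
proof -
  have supp: "{e. lp_monom d F e \<noteq> 0} = {F}" if "d \<noteq> 0" for d :: 'a and F
    using that by (auto simp: lp_monom_def)
  have "map2 (+) E (map uminus E) = replicate k 0"
    using assms(2) by (induction E arbitrary: k) auto
  then have "lp_mult (lp_monom c E) (lp_monom (inverse c) (map uminus E)) = lp_one k"
    using assms(1) by (auto simp: lp_mult_def supp lp_monom_def lp_one_def)
  moreover have "is_lpoly k (lp_monom d E)" "is_lpoly k (lp_monom d (map uminus E))" for d :: 'a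
    using assms(2) by (auto simp: is_lpoly_def lp_monom_def)
  ultimately show ?thesis
    unfolding lp_unit_def by blast
qed

section \<open>Monomial maps\<close>

lemma power_int_sum:
  fixes x :: "'a::field"
  assumes "x \<noteq> 0"
  shows "x powi (\<Sum>i\<in>A. f i) = (\<Prod>i\<in>A. x powi f i)"
  by (induction A rule: infinite_finite_induct) (auto simp: power_int_add assms)

lemma prod_power_int_distrib:
  fixes f :: "'b \<Rightarrow> 'a::field"
  shows "(\<Prod>i\<in>A. f i) powi n = (\<Prod>i\<in>A. f i powi n)"
  by (induction A rule: infinite_finite_induct) (auto simp: power_int_mult_distrib)

definition mpowi :: "'a::field list \<Rightarrow> int list \<Rightarrow> 'a" where
  "mpowi x e = (\<Prod>j<length x. (x ! j) powi (e ! j))"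

definition unit_vec :: "nat \<Rightarrow> nat \<Rightarrow> int list" where
  "unit_vec k i = map (\<lambda>j. if j = i then 1 else 0) [0..<k]"

text \<open>The endomorphisms of \<open>G\<^sub>m\<^sup>k\<close> are exactly the monomial maps
  \<open>x \<mapsto> (c\<^sub>i x\<^bsup>E i\<^esup>)\<^sub>i\<close>; we allow \<open>N\<close> output coordinates to also cover
  morphisms \<open>G\<^sub>m\<^sup>k \<rightarrow> G\<^sub>m\<^sup>N\<close>.\<close>

definition monomial_map :: "nat \<Rightarrow> (nat \<Rightarrow> 'a::field) \<Rightarrow> (nat \<Rightarrow> int list) \<Rightarrow> 'a list \<Rightarrow> 'a list" where
  "monomial_map N c E x = map (\<lambda>i. c i * mpowi x (E i)) [0..<N]"

definition monomial_data :: "nat \<Rightarrow> nat \<Rightarrow> (nat \<Rightarrow> 'a::field) \<Rightarrow> (nat \<Rightarrow> int list) \<Rightarrow> bool" where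
  "monomial_data N k c E \<longleftrightarrow> (\<forall>i<N. c i \<noteq> 0 \<and> length (E i) = k)"

text \<open>The exponent of \<open>x\<close> in \<open>(monomial_map N c E x)\<^bsup>e\<^esup>\<close>: the row vector \<open>e\<close>
  times the exponent matrix \<open>E\<close>.\<close>

definition exp_pullback :: "nat \<Rightarrow> nat \<Rightarrow> (nat \<Rightarrow> int list) \<Rightarrow> int list \<Rightarrow> int list" where
  "exp_pullback k N E e = map (\<lambda>j. \<Sum>i<N. e ! i * E i ! j) [0..<k]"

lemma length_monomial_map [simp]: "length (monomial_map N c E x) = N"
  by (simp add: monomial_map_def)

lemma nth_monomial_map [simp]: "i < N \<Longrightarrow> monomial_map N c E x ! i = c i * mpowi x (E i)"
  by (simp add: monomial_map_def)

lemma length_exp_pullback [simp]: "length (exp_pullback k N E e) = k"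
  by (simp add: exp_pullback_def)

lemma mpowi_nonzero: "torus_point k x \<Longrightarrow> mpowi x e \<noteq> 0"
  by (auto simp: mpowi_def torus_point_def)

lemma mpowi_unit_vec:
  assumes "i < length x"
  shows "mpowi x (unit_vec (length x) i) = x ! i"
proof -
  have "mpowi x (unit_vec (length x) i) = (\<Prod>j<length x. if j = i then x ! j else 1)"
    unfolding mpowi_def unit_vec_def by (rule prod.cong) auto
  also have "\<dots> = x ! i" using assms by simp
  finally show ?thesis .
qed

lemma mpowi_replicate_0: "mpowi x (replicate (length x) 0) = 1"
  by (simp add: mpowi_def)

lemma lp_eval_eq_sum_mpowi:
  assumes "finite A" "{e. f e \<noteq> 0} \<subseteq> A"
  shows "lp_eval f x = (\<Sum>e\<in>A. f e * mpowi x e)"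
  unfolding lp_eval_def mpowi_def
  by (rule sum.mono_neutral_left) (use assms in auto)

lemma torus_point_monomial_map:
  "monomial_data N k c E \<Longrightarrow> torus_point k x \<Longrightarrow> torus_point N (monomial_map N c E x)"
  by (auto simp: torus_point_def monomial_data_def mpowi_nonzero)

lemma monomial_data_id: "monomial_data k k (\<lambda>_. 1) (unit_vec k)"
  by (simp add: monomial_data_def unit_vec_def)

lemma monomial_map_id: "length x = k \<Longrightarrow> monomial_map k (\<lambda>_. 1) (unit_vec k) x = x"
  by (auto intro!: nth_equalityI simp: mpowi_unit_vec)

lemma funpow_monomial_map_id: "length x = k \<Longrightarrow> (monomial_map k (\<lambda>_. 1) (unit_vec k) ^^ n) x = x"
  by (induction n) (auto simp: monomial_map_id)

lemma mpowi_monomial_map: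
  assumes "torus_point k x" "length e = N"
  shows "mpowi (monomial_map N c E x) e = (\<Prod>i<N. c i powi (e ! i)) * mpowi x (exp_pullback k N E e)"
proof -
  have lx: "length x = k" and nz: "\<And>j. j < k \<Longrightarrow> x ! j \<noteq> 0"
    using assms(1) by (auto simp: torus_point_def)
  have "mpowi (monomial_map N c E x) e = (\<Prod>i<N. (c i * mpowi x (E i)) powi (e ! i))"
    by (simp add: mpowi_def)
  also have "\<dots> = (\<Prod>i<N. c i powi (e ! i)) * (\<Prod>i<N. mpowi x (E i) powi (e ! i))"
    by (simp add: power_int_mult_distrib prod.distrib)
  also have "(\<Prod>i<N. mpowi x (E i) powi (e ! i)) = (\<Prod>i<N. \<Prod>j<k. (x ! j) powi (e ! i * E i ! j))"
    by (simp add: mpowi_def lx prod_power_int_distrib mult.commute flip: power_int_mult)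
  also have "\<dots> = (\<Prod>j<k. \<Prod>i<N. (x ! j) powi (e ! i * E i ! j))"
    by (rule prod.swap)
  also have "\<dots> = mpowi x (exp_pullback k N E e)"
    by (simp add: mpowi_def exp_pullback_def lx power_int_sum nz)
  finally show ?thesis .
qed

lemma monomial_data_comp:
  assumes "monomial_data N k c E" "monomial_data P N d F"
  shows "monomial_data P k (\<lambda>l. d l * (\<Prod>i<N. c i powi (F l ! i))) (\<lambda>l. exp_pullback k N E (F l))"
  using assms by (auto simp: monomial_data_def)

lemma monomial_map_comp:
  assumes "monomial_data P N d F" "torus_point k x"
  shows "monomial_map P d F (monomial_map N c E x)
       = monomial_map P (\<lambda>l. d l * (\<Prod>i<N. c i powi (F l ! i))) (\<lambda>l. exp_pullback k N E (F l)) x"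
  using assms by (auto intro!: nth_equalityI simp: mpowi_monomial_map monomial_data_def)

lemma torus_point_funpow_monomial_map:
  "monomial_data k k c E \<Longrightarrow> torus_point k x \<Longrightarrow> torus_point k ((monomial_map k c E ^^ n) x)"
  by (induction n) (auto intro: torus_point_monomial_map)

lemma funpow_monomial_map:
  assumes "monomial_data k k c E"
  obtains c' E' where "monomial_data k k c' E'"
    and "\<And>x. torus_point k x \<Longrightarrow> (monomial_map k c E ^^ n) x = monomial_map k c' E' x"
proof (induction n arbitrary: thesis)
  case 0
  show ?case
    by (rule 0[OF monomial_data_id]) (simp add: monomial_map_id torus_point_def)
next
  case (Suc n)
  obtain c' E' where md': "monomial_data k k c' E'"
    and eq: "\<And>x. torus_point k x \<Longrightarrow> (monomial_map k c E ^^ n) x = monomial_map k c' E' x"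
    using Suc.IH by blast
  show ?case
    by (rule Suc.prems[OF monomial_data_comp[OF md' assms]]) (simp add: eq monomial_map_comp[OF assms])
qed

section \<open>Closed subsets of the torus\<close>

definition lp_pullback :: "nat \<Rightarrow> nat \<Rightarrow> (nat \<Rightarrow> 'a::field) \<Rightarrow> (nat \<Rightarrow> int list) \<Rightarrow> 'a lpoly \<Rightarrow> 'a lpoly" where
  "lp_pullback k N c E f = (\<lambda>e'. \<Sum>e\<in>{e. f e \<noteq> 0 \<and> exp_pullback k N E e = e'}. f e * (\<Prod>i<N. c i powi (e ! i)))"

lemma lp_pullback_support:
  "{e'. lp_pullback k N c E f e' \<noteq> 0} \<subseteq> exp_pullback k N E ` {e. f e \<noteq> 0}"
proof
  fix e' assume "e' \<in> {e'. lp_pullback k N c E f e' \<noteq> 0}"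
  then have "lp_pullback k N c E f e' \<noteq> 0" by simp
  then have "{e. f e \<noteq> 0 \<and> exp_pullback k N E e = e'} \<noteq> {}"
    unfolding lp_pullback_def by (rule contrapos_nn) (simp only: sum.empty)
  then show "e' \<in> exp_pullback k N E ` {e. f e \<noteq> 0}" by blast
qed

lemma is_lpoly_lp_pullback:
  assumes "is_lpoly N f"
  shows "is_lpoly k (lp_pullback k N c E f)"
proof -
  have "finite {e'. lp_pullback k N c E f e' \<noteq> 0}"
    by (rule finite_subset[OF lp_pullback_support]) (use assms in \<open>simp add: is_lpoly_def\<close>)
  moreover have "length e' = k" if "lp_pullback k N c E f e' \<noteq> 0" for e'
    using lp_pullback_support that by fastforce
  ultimately show ?thesis by (simp add: is_lpoly_def)
qed

lemma lp_eval_lp_pullback: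
  assumes md: "monomial_data N k c E" and x: "torus_point k x" and f: "is_lpoly N f"
  shows "lp_eval (lp_pullback k N c E f) x = lp_eval f (monomial_map N c E x)"
proof -
  let ?S = "{e. f e \<noteq> 0}" and ?h = "exp_pullback k N E" and ?C = "\<lambda>e. \<Prod>i<N. c i powi (e ! i)"
  have fin: "finite ?S" and lenS: "\<And>e. f e \<noteq> 0 \<Longrightarrow> length e = N"
    using f by (auto simp: is_lpoly_def)
  have "lp_eval (lp_pullback k N c E f) x = (\<Sum>e'\<in>?h ` ?S. lp_pullback k N c E f e' * mpowi x e')"
    by (intro lp_eval_eq_sum_mpowi finite_imageI fin lp_pullback_support)
  also have "\<dots> = (\<Sum>e'\<in>?h ` ?S. \<Sum>e\<in>{e. e \<in> ?S \<and> ?h e = e'}. f e * ?C e * mpowi x (?h e))"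
    unfolding lp_pullback_def sum_distrib_right by (intro sum.cong) auto
  also have "\<dots> = (\<Sum>e\<in>?S. f e * ?C e * mpowi x (?h e))"
    using fin by (rule sum.image_gen[symmetric])
  also have "\<dots> = (\<Sum>e\<in>?S. f e * mpowi (monomial_map N c E x) e)"
    by (intro sum.cong) (auto simp: mpowi_monomial_map[OF x] lenS)
  also have "\<dots> = lp_eval f (monomial_map N c E x)"
    by (simp add: lp_eval_def mpowi_def)
  finally show ?thesis .
qed

lemma torus_closed_points_preimage:
  assumes V: "torus_closed_points N V" and md: "monomial_data N k c E"
  shows "torus_closed_points k {x. torus_point k x \<and> monomial_map N c E x \<in> V}"
proof -
  obtain F where F: "finite F" "\<forall>f\<in>F. is_lpoly N f"
    and V_eq: "V = {x. torus_point N x \<and> (\<forall>f\<in>F. lp_eval f x = 0)}"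
    using V by (auto simp: torus_closed_points_def)
  let ?F = "lp_pullback k N c E ` F"
  have "{x. torus_point k x \<and> monomial_map N c E x \<in> V}
      = {x. torus_point k x \<and> (\<forall>f\<in>?F. lp_eval f x = 0)}"
    using F(2) by (auto simp: V_eq lp_eval_lp_pullback[OF md] torus_point_monomial_map[OF md])
  moreover have "finite ?F" "\<forall>f\<in>?F. is_lpoly k f"
    using F by (auto intro: is_lpoly_lp_pullback)
  ultimately show ?thesis
    unfolding torus_closed_points_def by (intro exI[of _ ?F]) simp
qed

lemma torus_closed_points_Int:
  assumes "torus_closed_points k V" "torus_closed_points k W"
  shows "torus_closed_points k (V \<inter> W)"
proof -
  obtain F G where FG: "finite F" "\<forall>f\<in>F. is_lpoly k f" "finite G" "\<forall>f\<in>G. is_lpoly k f"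
    and V: "V = {x. torus_point k x \<and> (\<forall>f\<in>F. lp_eval f x = 0)}"
    and W: "W = {x. torus_point k x \<and> (\<forall>f\<in>G. lp_eval f x = 0)}"
    using assms by (auto simp: torus_closed_points_def)
  show ?thesis
    unfolding torus_closed_points_def using FG by (intro exI[of _ "F \<union> G"]) (auto simp: V W)
qed

lemma torus_closed_points_coordinate:
  assumes t: "t < k"
  shows "torus_closed_points k {x. torus_point k x \<and> x ! t = (a::'a::field)}"
proof -
  define f :: "'a lpoly" where
    "f = (\<lambda>e. if e = unit_vec k t then 1 else if e = replicate k 0 then - a else 0)"
  have ne: "unit_vec k t \<noteq> replicate k 0"
  proof
    assume "unit_vec k t = replicate k 0"
    then have "unit_vec k t ! t = replicate k 0 ! t" by simp
    with t show False by (simp add: unit_vec_def)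
  qed
  have supp: "{e. f e \<noteq> 0} \<subseteq> {unit_vec k t, replicate k 0}" by (auto simp: f_def)
  have "is_lpoly k f"
    unfolding is_lpoly_def
  proof
    show "finite {e. f e \<noteq> 0}" using supp by (rule finite_subset) simp
    show "\<forall>e. f e \<noteq> 0 \<longrightarrow> length e = k" using supp by (auto simp: unit_vec_def)
  qed
  moreover have "lp_eval f x = x ! t - a" if "torus_point k x" for x
  proof -
    have lx: "length x = k" using that by (simp add: torus_point_def)
    have "lp_eval f x = (\<Sum>e\<in>{unit_vec k t, replicate k 0}. f e * mpowi x e)"
      using supp by (intro lp_eval_eq_sum_mpowi) auto
    also have "\<dots> = x ! t - a"
      using ne t lx mpowi_unit_vec[of t x] mpowi_replicate_0[of x] by (simp add: f_def)
    finally show ?thesis .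
  qed
  then have "{x. torus_point k x \<and> x ! t = a} = {x. torus_point k x \<and> (\<forall>g\<in>{f}. lp_eval g x = 0)}"
    by auto
  ultimately show ?thesis
    unfolding torus_closed_points_def by (intro exI[of _ "{f}"]) simp
qed

lemma lp_eval_lp_monom: "c \<noteq> 0 \<Longrightarrow> lp_eval (lp_monom c E) x = c * mpowi x E"
  by (simp add: lp_eval_eq_sum_mpowi[of "{E}"] lp_monom_def)

definition DML_monomial :: "'a::field itself \<Rightarrow> nat \<Rightarrow> nat set \<Rightarrow> bool" where
  "DML_monomial _ k S \<longleftrightarrow> (\<exists>(c::nat \<Rightarrow> 'a) E \<alpha> V. monomial_data k k c E \<and> torus_point k \<alpha> \<and>
      torus_closed_points k V \<and> S = {n. (monomial_map k c E ^^ n) \<alpha> \<in> V})"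

lemma DML_torus_iff_DML_monomial: "DML_torus TYPE('a::field) k S \<longleftrightarrow> DML_monomial TYPE('a) k S"
proof
  assume "DML_torus TYPE('a) k S"
  then obtain \<Phi> :: "'a lpoly list" and \<alpha> V where \<Phi>: "torus_endo k \<Phi>" and rest: "torus_point k \<alpha>"
    "torus_closed_points k V" "S = {n. (apply_endo \<Phi> ^^ n) \<alpha> \<in> V}"
    unfolding DML_torus_def by blast
  have "\<forall>i. i < k \<longrightarrow> (\<exists>c E. c \<noteq> 0 \<and> length E = k \<and> \<Phi> ! i = lp_monom c E)"
  proof (intro allI impI)
    fix i assume "i < k"
    with \<Phi> have "lp_unit k (\<Phi> ! i)" by (simp add: torus_endo_def)
    then obtain c E where "c \<noteq> 0" "length E = k" "\<Phi> ! i = lp_monom c E"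
      by (rule lp_unit_imp_monom)
    then show "\<exists>c E. c \<noteq> 0 \<and> length E = k \<and> \<Phi> ! i = lp_monom c E" by blast
  qed
  then obtain c E where cE: "\<forall>i. i < k \<longrightarrow> c i \<noteq> 0 \<and> length (E i) = k \<and> \<Phi> ! i = lp_monom (c i) (E i)"
    unfolding choice_iff' by blast
  have "monomial_data k k c E" using cE by (simp add: monomial_data_def)
  moreover have "apply_endo \<Phi> = monomial_map k c E"
    using cE \<Phi> by (intro ext nth_equalityI) (auto simp: torus_endo_def apply_endo_def lp_eval_lp_monom)
  ultimately show "DML_monomial TYPE('a) k S"
    unfolding DML_monomial_def using rest by (intro exI[of _ c] exI[of _ E] exI[of _ \<alpha>] exI[of _ V]) simp
next
  assume "DML_monomial TYPE('a) k S"
  then obtain c :: "nat \<Rightarrow> 'a" and E \<alpha> V where md: "monomial_data k k c E" and rest: "torus_point k \<alpha>"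
    "torus_closed_points k V" "S = {n. (monomial_map k c E ^^ n) \<alpha> \<in> V}"
    unfolding DML_monomial_def by blast
  define \<Phi> where "\<Phi> = map (\<lambda>i. lp_monom (c i) (E i)) [0..<k]"
  have "torus_endo k \<Phi>"
    using md by (auto simp: torus_endo_def \<Phi>_def monomial_data_def intro!: lp_unit_lp_monom)
  moreover have "apply_endo \<Phi> = monomial_map k c E"
    using md by (auto simp: apply_endo_def \<Phi>_def monomial_map_def lp_eval_lp_monom monomial_data_def)
  ultimately show "DML_torus TYPE('a) k S"
    unfolding DML_torus_def using rest by (intro exI[of _ \<Phi>] exI[of _ \<alpha>] exI[of _ V]) simp
qed

section \<open>Registers of several tori\<close>

definition block :: "nat \<Rightarrow> nat \<Rightarrow> 'a list \<Rightarrow> 'a list" where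
  "block k b x = take k (drop (b * k) x)"

definition stack_blocks :: "nat \<Rightarrow> nat \<Rightarrow> (nat \<Rightarrow> 'a list) \<Rightarrow> 'a list" where
  "stack_blocks B k Y = map (\<lambda>i. Y (i div k) ! (i mod k)) [0..<B * k]"

definition embed_block :: "nat \<Rightarrow> nat \<Rightarrow> nat \<Rightarrow> int list \<Rightarrow> int list" where
  "embed_block k B b e = replicate (b * k) 0 @ e @ replicate ((B - Suc b) * k) 0"

lemma block_end_le: "b < B \<Longrightarrow> b * k + k \<le> B * (k::nat)"
  using mult_le_mono1[of "Suc b" B k] by simp

lemma length_block: "length x = B * k \<Longrightarrow> b < B \<Longrightarrow> length (block k b x) = k"
  using block_end_le[of b B k] by (simp add: block_def)

lemma nth_block: "length x = B * k \<Longrightarrow> b < B \<Longrightarrow> t < k \<Longrightarrow> block k b x ! t = x ! (b * k + t)"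
  using block_end_le[of b B k] by (simp add: block_def)

lemma length_stack_blocks [simp]: "length (stack_blocks B k Y) = B * k"
  by (simp add: stack_blocks_def)

lemma block_stack_blocks:
  assumes "b < B" "length (Y b) = k"
  shows "block k b (stack_blocks B k Y) = Y b"
proof (rule nth_equalityI)
  have len: "length (block k b (stack_blocks B k Y)) = k"
    using length_block[OF length_stack_blocks assms(1)] .
  with assms show "length (block k b (stack_blocks B k Y)) = length (Y b)" by simp
  fix t assume "t < length (block k b (stack_blocks B k Y))"
  with len have t: "t < k" by simp
  then have "b * k + t < B * k" using block_end_le[OF assms(1), of k] by linarith
  with t assms(1) show "block k b (stack_blocks B k Y) ! t = Y b ! t"
    by (subst nth_block[OF length_stack_blocks assms(1) t]) (simp add: stack_blocks_def)
qed

lemma torus_point_stack_blocks: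
  assumes "0 < k" "\<And>b. b < B \<Longrightarrow> torus_point k (Y b)"
  shows "torus_point (B * k) (stack_blocks B k Y)"
  using assms by (auto simp: torus_point_def stack_blocks_def less_mult_imp_div_less)

lemma length_embed_block: "length e = k \<Longrightarrow> b < B \<Longrightarrow> length (embed_block k B b e) = B * k"
  using block_end_le[of b B k] by (simp add: embed_block_def diff_mult_distrib)

lemma nth_embed_block:
  assumes "length e = k" "b < B" "j < B * k"
  shows "embed_block k B b e ! j = (if b * k \<le> j \<and> j < b * k + k then e ! (j - b * k) else 0)"
  using assms block_end_le[of b B k]
  by (auto simp: embed_block_def nth_append diff_mult_distrib)

lemma mpowi_embed_block:
  assumes x: "length x = B * k" and e: "length e = k" and b: "b < B"
  shows "mpowi x (embed_block k B b e) = mpowi (block k b x) e"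
proof -
  let ?g = "\<lambda>j. x ! j powi (embed_block k B b e ! j)"
  have bk: "b * k + k \<le> B * k" using b by (rule block_end_le)
  have "mpowi x (embed_block k B b e) = (\<Prod>j\<in>{..<B * k}. ?g j)" by (simp add: mpowi_def x)
  also have "\<dots> = (\<Prod>j\<in>{b * k..<b * k + k}. ?g j)"
    by (rule prod.mono_neutral_right) (use bk nth_embed_block[OF e b] in auto)
  also have "\<dots> = (\<Prod>t\<in>{0..<k}. ?g (t + b * k))"
    using prod.shift_bounds_nat_ivl[of ?g 0 "b * k" k] by (simp add: add.commute)
  also have "\<dots> = mpowi (block k b x) e"
    using bk by (auto simp: mpowi_def length_block[OF x b] nth_block[OF x b] nth_embed_block[OF e b]
        add.commute atLeast0LessThan intro!: prod.cong)
  finally show ?thesis .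
qed

lemma monomial_map_eq_block:
  assumes "length x = B * k" "b < B"
  shows "monomial_map k (\<lambda>_. 1) (\<lambda>t. unit_vec (B * k) (b * k + t)) x = block k b x"
  using assms block_end_le[OF assms(2), of k]
  by (auto intro!: nth_equalityI simp: length_block[OF assms] nth_block[OF assms]
      mpowi_unit_vec[of _ x, simplified assms(1)])

lemma torus_closed_points_block_preimage:
  assumes "torus_closed_points k V" "b < B"
  shows "torus_closed_points (B * k) {x. torus_point (B * k) x \<and> block k b x \<in> V}"
proof -
  have "monomial_data k (B * k) (\<lambda>_. 1::'a) (\<lambda>t. unit_vec (B * k) (b * k + t))"
    by (simp add: monomial_data_def unit_vec_def)
  from torus_closed_points_preimage[OF assms(1) this] show ?thesis
  proof (rule back_subst[of "torus_closed_points (B * k)"], intro Collect_cong conj_cong refl)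
    fix x :: "'a list" assume "torus_point (B * k) x"
    then show "monomial_map k (\<lambda>_. 1) (\<lambda>t. unit_vec (B * k) (b * k + t)) x \<in> V \<longleftrightarrow> block k b x \<in> V"
      using monomial_map_eq_block[of x B k b] assms(2) by (simp add: torus_point_def)
  qed
qed

lemma monomial_map_wiring:
  fixes cs :: "nat \<Rightarrow> nat \<Rightarrow> 'a::field"
  assumes k: "0 < k" and nx: "\<And>b. b < B \<Longrightarrow> nx b < B"
    and md: "\<And>b. b < B \<Longrightarrow> monomial_data k k (cs b) (Es b)"
  obtains c E where "monomial_data (B * k) (B * k) c E"
    and "\<And>Z. (\<And>b. b < B \<Longrightarrow> length (Z b :: 'a list) = k) \<Longrightarrow>
      monomial_map (B * k) c E (stack_blocks B k Z)
        = stack_blocks B k (\<lambda>b. monomial_map k (cs b) (Es b) (Z (nx b)))"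
proof
  define c where "c = (\<lambda>i. cs (i div k) (i mod k))"
  define E where "E = (\<lambda>i. embed_block k B (nx (i div k)) (Es (i div k) (i mod k)))"
  have div: "i div k < B" if "i < B * k" for i
    using that by (simp add: less_mult_imp_div_less)
  show "monomial_data (B * k) (B * k) c E"
    using md div nx k by (auto simp: monomial_data_def c_def E_def intro!: length_embed_block)
  fix Z :: "nat \<Rightarrow> 'a list" assume Z: "\<And>b. b < B \<Longrightarrow> length (Z b) = k"
  show "monomial_map (B * k) c E (stack_blocks B k Z)
      = stack_blocks B k (\<lambda>b. monomial_map k (cs b) (Es b) (Z (nx b)))"
  proof (rule nth_equalityI)
    fix i assume "i < length (monomial_map (B * k) c E (stack_blocks B k Z))"
    then have i: "i < B * k" by simp
    define b where "b = i div k"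
    have b: "b < B" and nxb: "nx b < B" using div[OF i] nx by (auto simp: b_def)
    have "length (Es b (i mod k)) = k" using md[OF b] k by (simp add: monomial_data_def)
    then have "mpowi (stack_blocks B k Z) (E i) = mpowi (block k (nx b) (stack_blocks B k Z)) (Es b (i mod k))"
      unfolding E_def b_def[symmetric] using nxb by (rule mpowi_embed_block[OF length_stack_blocks])
    also have "\<dots> = mpowi (Z (nx b)) (Es b (i mod k))"
      using block_stack_blocks[of "nx b" B Z k, OF nxb Z[OF nxb]] by simp
    finally have "mpowi (stack_blocks B k Z) (E i) = mpowi (Z (nx b)) (Es b (i mod k))" .
    then show "monomial_map (B * k) c E (stack_blocks B k Z) ! i
        = stack_blocks B k (\<lambda>b. monomial_map k (cs b) (Es b) (Z (nx b))) ! i"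
      using i k by (simp add: stack_blocks_def c_def b_def)
  qed simp
qed

lemma torus_point_register:
  fixes cs :: "nat \<Rightarrow> nat \<Rightarrow> 'a::field"
  assumes nx: "\<And>b. b < B \<Longrightarrow> nx b < B"
    and md: "\<And>b. b < B \<Longrightarrow> monomial_data k k (cs b) (Es b)"
    and Y_0: "\<And>b. b < B \<Longrightarrow> torus_point k (Y 0 b)"
    and Y_Suc: "\<And>n b. b < B \<Longrightarrow> Y (Suc n) b = monomial_map k (cs b) (Es b) (Y n (nx b))"
  shows "b < B \<Longrightarrow> torus_point k (Y n b)"
  by (induction n arbitrary: b) (auto simp: Y_0 Y_Suc intro!: torus_point_monomial_map[OF md] nx)

lemma DML_monomial_register:
  fixes cs :: "nat \<Rightarrow> nat \<Rightarrow> 'a::field"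
  assumes k: "0 < k" and nx: "\<And>b. b < B \<Longrightarrow> nx b < B"
    and md: "\<And>b. b < B \<Longrightarrow> monomial_data k k (cs b) (Es b)"
    and Y_0: "\<And>b. b < B \<Longrightarrow> torus_point k (Y 0 b)"
    and Y_Suc: "\<And>n b. b < B \<Longrightarrow> Y (Suc n) b = monomial_map k (cs b) (Es b) (Y n (nx b))"
    and V: "torus_closed_points (B * k) V"
  shows "DML_monomial TYPE('a) (B * k) {n. stack_blocks B k (Y n) \<in> V}"
proof -
  obtain c E where md': "monomial_data (B * k) (B * k) c E"
    and step: "\<And>Z. (\<And>b. b < B \<Longrightarrow> length (Z b :: 'a list) = k) \<Longrightarrow>
      monomial_map (B * k) c E (stack_blocks B k Z)
        = stack_blocks B k (\<lambda>b. monomial_map k (cs b) (Es b) (Z (nx b)))"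
    using monomial_map_wiring[of k B nx cs Es] k nx md by blast
  have torus: "torus_point k (Y n b)" if "b < B" for n b
    using nx md Y_0 Y_Suc that by (rule torus_point_register)
  have "(monomial_map (B * k) c E ^^ n) (stack_blocks B k (Y 0)) = stack_blocks B k (Y n)" for n
  proof (induction n)
    case (Suc n)
    have "stack_blocks B k (Y (Suc n)) = stack_blocks B k (\<lambda>b. monomial_map k (cs b) (Es b) (Y n (nx b)))"
      by (simp add: stack_blocks_def Y_Suc k less_mult_imp_div_less)
    with Suc torus show ?case by (simp add: step torus_point_def)
  qed simp
  moreover have "torus_point (B * k) (stack_blocks B k (Y 0))"
    using k Y_0 by (rule torus_point_stack_blocks)
  ultimately show ?thesis
    unfolding DML_monomial_def using md' V
    by (intro exI[of _ c] exI[of _ E] exI[of _ "stack_blocks B k (Y 0)"] exI[of _ V]) simp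
qed

lemma DML_monomial_register_block:
  fixes cs :: "nat \<Rightarrow> nat \<Rightarrow> 'a::field"
  assumes k: "0 < k" and nx: "\<And>b. b < B \<Longrightarrow> nx b < B"
    and md: "\<And>b. b < B \<Longrightarrow> monomial_data k k (cs b) (Es b)"
    and Y_0: "\<And>b. b < B \<Longrightarrow> torus_point k (Y 0 b)"
    and Y_Suc: "\<And>n b. b < B \<Longrightarrow> Y (Suc n) b = monomial_map k (cs b) (Es b) (Y n (nx b))"
    and V: "torus_closed_points k V" and b_less: "b < B"
  shows "DML_monomial TYPE('a) (B * k) {n. Y n b \<in> V}"
proof -
  have torus: "torus_point k (Y n b')" if "b' < B" for n b'
    using nx md Y_0 Y_Suc that by (rule torus_point_register)
  have "stack_blocks B k (Y n) \<in> {x. torus_point (B * k) x \<and> block k b x \<in> V} \<longleftrightarrow> Y n b \<in> V" for n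
  proof -
    have "torus_point (B * k) (stack_blocks B k (Y n))"
      by (rule torus_point_stack_blocks[of k B "Y n", OF k torus])
    moreover have "block k b (stack_blocks B k (Y n)) = Y n b"
      using torus[OF b_less] by (intro block_stack_blocks b_less) (simp add: torus_point_def)
    ultimately show ?thesis by simp
  qed
  moreover have "DML_monomial TYPE('a) (B * k)
      {n. stack_blocks B k (Y n) \<in> {x. torus_point (B * k) x \<and> block k b x \<in> V}}"
    using k nx md Y_0 Y_Suc torus_closed_points_block_preimage[OF V b_less]
    by (rule DML_monomial_register)
  ultimately show ?thesis by simp
qed

section \<open>Arithmetic operations on DML sets\<close>

lemma DML_monomial_Int:
  assumes k: "0 < k" and "DML_monomial TYPE('a::field) k S" "DML_monomial TYPE('a) k T"
  shows "DML_monomial TYPE('a) (2 * k) (S \<inter> T)"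
proof -
  obtain c1 :: "nat \<Rightarrow> 'a" and E1 \<alpha>1 V1 where md1: "monomial_data k k c1 E1" and \<alpha>1: "torus_point k \<alpha>1"
    and V1: "torus_closed_points k V1" and S: "S = {n. (monomial_map k c1 E1 ^^ n) \<alpha>1 \<in> V1}"
    using assms(2) unfolding DML_monomial_def by blast
  obtain c2 :: "nat \<Rightarrow> 'a" and E2 \<alpha>2 V2 where md2: "monomial_data k k c2 E2" and \<alpha>2: "torus_point k \<alpha>2"
    and V2: "torus_closed_points k V2" and T: "T = {n. (monomial_map k c2 E2 ^^ n) \<alpha>2 \<in> V2}"
    using assms(3) unfolding DML_monomial_def by blast
  define cs where "cs = (\<lambda>b::nat. if b = 0 then c1 else c2)"
  define Es where "Es = (\<lambda>b::nat. if b = 0 then E1 else E2)"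
  define Y where "Y = (\<lambda>n b. (monomial_map k (cs b) (Es b) ^^ n) (if b = 0 then \<alpha>1 else \<alpha>2))"
  define V where "V = {x. torus_point (2 * k) x \<and> block k 0 x \<in> V1} \<inter> {x. torus_point (2 * k) x \<and> block k 1 x \<in> V2}"
  have md: "monomial_data k k (cs b) (Es b)" for b
    using md1 md2 by (simp add: cs_def Es_def)
  have torus: "torus_point k (Y n b)" for n b
    unfolding Y_def using md \<alpha>1 \<alpha>2 by (intro torus_point_funpow_monomial_map) auto
  have "DML_monomial TYPE('a) (2 * k) {n. stack_blocks 2 k (Y n) \<in> V}"
    unfolding V_def
    by (rule DML_monomial_register[where nx = id])
      (use k md \<alpha>1 \<alpha>2 in \<open>auto simp: Y_def intro!: torus_closed_points_Int torus_closed_points_block_preimage V1 V2\<close>)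
  moreover have "block k b (stack_blocks 2 k (Y n)) = Y n b" if "b < 2" for b n
    using that torus by (intro block_stack_blocks) (auto simp: torus_point_def)
  then have "{n. stack_blocks 2 k (Y n) \<in> V} = S \<inter> T"
    using torus_point_stack_blocks[OF k torus]
    by (auto simp: V_def S T Y_def cs_def Es_def)
  ultimately show ?thesis by simp
qed

text \<open>A delay line: block \<open>b\<close> holds the state of time \<open>n + b\<close> of a system that only moves
  every \<open>m\<close> steps, the last block advancing it and the others shifting down.\<close>

lemma DML_monomial_cyclic_delay:
  fixes c :: "nat \<Rightarrow> 'a::field"
  assumes k: "0 < k" and m: "0 < m" and md: "monomial_data k k c E"
    and z: "\<And>j. j < m \<Longrightarrow> torus_point k (z j)" and V: "torus_closed_points k V"
  shows "DML_monomial TYPE('a) (m * k) {n. (monomial_map k c E ^^ (n div m)) (z (n mod m)) \<in> V}"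
proof -
  let ?P = "monomial_map k c E"
  define Y where "Y = (\<lambda>n b. (?P ^^ ((n + b) div m)) (z ((n + b) mod m)))"
  define cs where "cs = (\<lambda>b. if b = m - 1 then c else (\<lambda>_. 1))"
  define Es where "Es = (\<lambda>b. if b = m - 1 then E else unit_vec k)"
  have torus: "torus_point k (Y n b)" for n b
    unfolding Y_def using m by (intro torus_point_funpow_monomial_map md z) simp
  have "Y (Suc n) b = monomial_map k (cs b) (Es b) (Y n (Suc b mod m))" if "b < m" for n b
  proof (cases "b = m - 1")
    case True
    then have "Suc n + b = n + m" "Suc b mod m = 0" using m by auto
    then show ?thesis using True m by (simp add: Y_def cs_def Es_def div_add_self2)
  next
    case False
    with that have "Suc b mod m = Suc b" by simp
    moreover have "length (Y n (Suc b)) = k" using torus by (simp add: torus_point_def)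
    ultimately show ?thesis using False
      by (simp add: cs_def Es_def monomial_map_id) (simp add: Y_def)
  qed
  then have "DML_monomial TYPE('a) (m * k) {n. Y n 0 \<in> V}"
    using k m md torus V
    by (intro DML_monomial_register_block[of k m "\<lambda>b. Suc b mod m" cs Es Y V 0])
      (auto simp: cs_def Es_def monomial_data_id)
  then show ?thesis by (simp add: Y_def)
qed

lemma DML_monomial_saturating_delay:
  fixes c :: "nat \<Rightarrow> 'a::field"
  assumes k: "0 < k" and md: "monomial_data k k c E"
    and z: "\<And>j. j \<le> m \<Longrightarrow> torus_point k (z j)" and V: "torus_closed_points k V"
  shows "DML_monomial TYPE('a) (Suc m * k) {n. (monomial_map k c E ^^ (n - m)) (z (min n m)) \<in> V}"
proof -
  let ?P = "monomial_map k c E"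
  define Y where "Y = (\<lambda>n b. (?P ^^ (n + b - m)) (z (min (n + b) m)))"
  define cs where "cs = (\<lambda>b. if b = m then c else (\<lambda>_. 1))"
  define Es where "Es = (\<lambda>b. if b = m then E else unit_vec k)"
  have torus: "torus_point k (Y n b)" for n b
    unfolding Y_def by (intro torus_point_funpow_monomial_map md z) simp
  have "Y (Suc n) b = monomial_map k (cs b) (Es b) (Y n (min (Suc b) m))" if "b < Suc m" for n b
  proof (cases "b = m")
    case True
    then show ?thesis by (simp add: Y_def cs_def Es_def)
  next
    case False
    with that have "min (Suc b) m = Suc b" by simp
    moreover have "length (Y n (Suc b)) = k" using torus by (simp add: torus_point_def)
    ultimately show ?thesis using False
      by (simp add: cs_def Es_def monomial_map_id) (simp add: Y_def)
  qed
  then have "DML_monomial TYPE('a) (Suc m * k) {n. Y n 0 \<in> V}"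
    using k md torus V
    by (intro DML_monomial_register_block[of k "Suc m" "\<lambda>b. min (Suc b) m" cs Es Y V 0])
      (auto simp: cs_def Es_def monomial_data_id)
  then show ?thesis by (simp add: Y_def)
qed

lemma DML_monomial_vimage_div:
  assumes k: "0 < k" and m: "0 < m" and S: "DML_monomial TYPE('a::field) k S"
  shows "DML_monomial TYPE('a) (m * k) {n. n div m \<in> S}"
proof -
  obtain c :: "nat \<Rightarrow> 'a" and E \<alpha> V where "monomial_data k k c E" "torus_point k \<alpha>"
    "torus_closed_points k V" and S_eq: "S = {n. (monomial_map k c E ^^ n) \<alpha> \<in> V}"
    using S unfolding DML_monomial_def by blast
  with DML_monomial_cyclic_delay[OF k m, of c E "\<lambda>_. \<alpha>" V] show ?thesis by simp
qed

lemma DML_monomial_vimage_diff: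
  assumes k: "0 < k" and S: "DML_monomial TYPE('a::field) k S"
  shows "DML_monomial TYPE('a) (Suc m * k) {n. n - m \<in> S}"
proof -
  obtain c :: "nat \<Rightarrow> 'a" and E \<alpha> V where "monomial_data k k c E" "torus_point k \<alpha>"
    "torus_closed_points k V" and S_eq: "S = {n. (monomial_map k c E ^^ n) \<alpha> \<in> V}"
    using S unfolding DML_monomial_def by blast
  with DML_monomial_saturating_delay[OF k, of c E m "\<lambda>_. \<alpha>" V] show ?thesis by simp
qed

text \<open>Counters are delay lines of the identity map started at the distinct points
  \<open>(a, \<dots>, a)\<close> and \<open>(1, \<dots>, 1)\<close>; this is where \<open>K \<noteq> \<bbbF>\<^sub>2\<close> is needed.\<close>

lemma DML_monomial_dvd:
  fixes a :: "'a::field"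
  assumes a: "a \<noteq> 0" "a \<noteq> 1" and k: "0 < k" and m: "0 < m"
  shows "DML_monomial TYPE('a) (m * k) {n. m dvd n}"
proof -
  define z :: "nat \<Rightarrow> 'a list" where "z = (\<lambda>j. replicate k (if j = 0 then a else 1))"
  let ?V = "{y. torus_point k y \<and> y ! 0 = a}"
  have "DML_monomial TYPE('a) (m * k)
      {n. (monomial_map k (\<lambda>_. 1) (unit_vec k) ^^ (n div m)) (z (n mod m)) \<in> ?V}"
    using k m a(1) monomial_data_id torus_closed_points_coordinate[OF k]
    by (intro DML_monomial_cyclic_delay) (auto simp: z_def torus_point_def)
  moreover have "z (n mod m) \<in> ?V \<longleftrightarrow> m dvd n" for n
    using a k by (auto simp: z_def torus_point_def dvd_eq_mod_eq_0)
  ultimately show ?thesis by (simp add: funpow_monomial_map_id z_def)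
qed

lemma DML_monomial_atLeast:
  fixes a :: "'a::field"
  assumes a: "a \<noteq> 0" "a \<noteq> 1" and k: "0 < k"
  shows "DML_monomial TYPE('a) (Suc m * k) {m..}"
proof -
  define z :: "nat \<Rightarrow> 'a list" where "z = (\<lambda>j. replicate k (if j = m then a else 1))"
  let ?V = "{y. torus_point k y \<and> y ! 0 = a}"
  have "DML_monomial TYPE('a) (Suc m * k)
      {n. (monomial_map k (\<lambda>_. 1) (unit_vec k) ^^ (n - m)) (z (min n m)) \<in> ?V}"
    using k a(1) monomial_data_id torus_closed_points_coordinate[OF k]
    by (intro DML_monomial_saturating_delay) (auto simp: z_def torus_point_def)
  moreover have "z (min n m) \<in> ?V \<longleftrightarrow> n \<in> {m..}" for n
    using a k by (auto simp: z_def torus_point_def)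
  ultimately show ?thesis by (simp add: funpow_monomial_map_id z_def atLeast_def)
qed

lemma DML_monomial_progression:
  assumes "DML_monomial TYPE('a::field) k S"
  shows "DML_monomial TYPE('a) k {n. m * n + r \<in> S}"
proof -
  obtain c :: "nat \<Rightarrow> 'a" and E \<alpha> V where md: "monomial_data k k c E" and \<alpha>: "torus_point k \<alpha>"
    and V: "torus_closed_points k V" and S: "S = {n. (monomial_map k c E ^^ n) \<alpha> \<in> V}"
    using assms unfolding DML_monomial_def by blast
  let ?P = "monomial_map k c E"
  obtain c' E' where md': "monomial_data k k c' E'"
    and P_m: "\<And>x. torus_point k x \<Longrightarrow> (?P ^^ m) x = monomial_map k c' E' x"
    using funpow_monomial_map[OF md] by blast
  have "(monomial_map k c' E' ^^ n) ((?P ^^ r) \<alpha>) = (?P ^^ (m * n + r)) \<alpha>" for n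
  proof (induction n)
    case (Suc n)
    have "(?P ^^ (m * Suc n + r)) \<alpha> = (?P ^^ m) ((?P ^^ (m * n + r)) \<alpha>)"
      by (simp add: funpow_add add.assoc)
    with Suc show ?case
      using P_m[OF torus_point_funpow_monomial_map[OF md \<alpha>]] by simp
  qed simp
  then show ?thesis
    unfolding DML_monomial_def using md' V torus_point_funpow_monomial_map[OF md \<alpha>]
    by (intro exI[of _ c'] exI[of _ E'] exI[of _ "(?P ^^ r) \<alpha>"] exI[of _ V]) (simp add: S)
qed

lemma DML_split_torus_iff_DML_monomial:
  "DML_split_torus TYPE('a::field) S \<longleftrightarrow> (\<exists>k>0. DML_monomial TYPE('a) k S)"
  by (auto simp: DML_split_torus_def DML_torus_iff_DML_monomial Suc_le_eq)

lemma DML_split_torus_mult_image_iff: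
  fixes a :: "'a::field"
  assumes a: "a \<noteq> 0" "a \<noteq> 1" and m: "0 < m"
  shows "DML_split_torus TYPE('a) ((\<lambda>s. m * s) ` S) \<longleftrightarrow> DML_split_torus TYPE('a) S"
  unfolding DML_split_torus_iff_DML_monomial
proof (intro iffI; elim exE conjE)
  fix k assume "0 < k" and D: "DML_monomial TYPE('a) k ((\<lambda>s. m * s) ` S)"
  have "{n. m * n + 0 \<in> (\<lambda>s. m * s) ` S} = S" using m by auto
  with \<open>0 < k\<close> DML_monomial_progression[OF D, of m 0] show "\<exists>k>0. DML_monomial TYPE('a) k S"
    by auto
next
  fix k assume "0 < k" "DML_monomial TYPE('a) k S"
  with a m have "DML_monomial TYPE('a) (2 * (m * k)) ({n. n div m \<in> S} \<inter> {n. m dvd n})"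
    by (intro DML_monomial_Int DML_monomial_vimage_div DML_monomial_dvd) simp_all
  moreover have "{n. n div m \<in> S} \<inter> {n. m dvd n} = (\<lambda>s. m * s) ` S" using m by auto
  ultimately show "\<exists>k>0. DML_monomial TYPE('a) k ((\<lambda>s. m * s) ` S)"
    using \<open>0 < k\<close> m by (intro exI[of _ "2 * (m * k)"]) simp
qed

lemma DML_split_torus_add_image_iff:
  fixes a :: "'a::field"
  assumes a: "a \<noteq> 0" "a \<noteq> 1"
  shows "DML_split_torus TYPE('a) ((\<lambda>s. m + s) ` S) \<longleftrightarrow> DML_split_torus TYPE('a) S"
  unfolding DML_split_torus_iff_DML_monomial
proof (intro iffI; elim exE conjE)
  fix k assume "0 < k" and D: "DML_monomial TYPE('a) k ((\<lambda>s. m + s) ` S)"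
  have "{n. 1 * n + m \<in> (\<lambda>s. m + s) ` S} = S" by auto
  with \<open>0 < k\<close> DML_monomial_progression[OF D, of 1 m] show "\<exists>k>0. DML_monomial TYPE('a) k S"
    by auto
next
  fix k assume "0 < k" "DML_monomial TYPE('a) k S"
  with a have "DML_monomial TYPE('a) (2 * (Suc m * k)) ({n. n - m \<in> S} \<inter> {m..})"
    by (intro DML_monomial_Int DML_monomial_vimage_diff DML_monomial_atLeast) simp_all
  moreover have "{n. n - m \<in> S} \<inter> {m..} = (\<lambda>s. m + s) ` S"
    by (auto simp: image_iff) (metis le_add_diff_inverse)
  ultimately show "\<exists>k>0. DML_monomial TYPE('a) k ((\<lambda>s. m + s) ` S)"
    using \<open>0 < k\<close> by (intro exI[of _ "2 * (Suc m * k)"]) simp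
qed

theorem lemma2p3:
  fixes S :: "nat set" and m :: nat
  assumes notF2: "\<not> (finite (UNIV :: 'a::field set) \<and> card (UNIV :: 'a set) = 2)"
    and m: "m \<ge> 1"
  shows "(DML_split_torus TYPE('a) ((\<lambda>s. m * s) ` S) \<longleftrightarrow> DML_split_torus TYPE('a) S)
       \<and> (DML_split_torus TYPE('a) ((\<lambda>s. m + s) ` S) \<longleftrightarrow> DML_split_torus TYPE('a) S)"
proof -
  obtain a :: 'a where "a \<noteq> 0" "a \<noteq> 1"
  proof (rule ccontr)
    assume "\<not> thesis"
    with that have U: "(UNIV :: 'a set) = {0, 1}" by blast
    have "finite (UNIV :: 'a set) \<and> card (UNIV :: 'a set) = 2" by (simp add: U)
    with notF2 show False ..
  qed
  with m show ?thesis
    by (simp add: DML_split_torus_mult_image_iff DML_split_torus_add_image_iff)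
qed

end
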